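(* Let $G$ be a decomposable (chordal) undirected graph on $\{1,\dots,d\}$ whose largest clique has size three, and consider the palindromic Ising model with concentration graph $G$: the set of positive distributions $p$ on $\{0,1\}^d$ that are palindromic, have log-linear interactions $\lambda_b=0$ for all $|b|\ge3$, and have $\lambda_{\{i,j\}}=0$ whenever $\{i,j\}$ is not an edge of $G$. Given a random sample of size $n$ with cell counts $n(a)$, $a\in\{0,1\}^d$, the maximum likelihood estimate of $p$ in this model is obtained in closed form from the marginal correlations of the symmetrized $2\times 2$ tables of the pairs of variables within the 2-node and 3-node cliques of $G$, namely from the cross-sum differences $\hat\xi_{st}=\frac1n\sum_{a}(-1)^{a_s+a_t}n(a)$ for pairs $\{s,t\}$ contained in a clique of $G$.
   Context: Palindromic: $p(a)=p(\sim a)$ for all $a$, where $\sim a$ is the complement of the binary vector $a$. Log-linear interactions: $\lambda_b=2^{-d}\sum_a(-1)^{a\cdot b}\log p(a)$, $|b|=\sum_vb_v$. A clique is a maximal complete subset of nodes. The symmetrized counts are $\hat n(a)=\{n(a)+n(\sim a)\}/2$; the correlation of the $\pm1$-coded variables $(-1)^{A_s},(-1)^{A_t}$ in the symmetrized $2\times2$ marginal table of $(A_s,A_t)$ equals $\hat\xi_{st}$. *)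

theory Defs
  imports Complex_Main "HOL-Library.FuncSet"
begin

text \<open>Nodes are 0,...,d-1; a configuration a in {0,1}^d is an extensional function on {0..<d}.\<close>

definition cfgs :: "nat \<Rightarrow> (nat \<Rightarrow> nat) set" where
  "cfgs d = {0..<d} \<rightarrow>\<^sub>E {0, 1}"

definition compl_cfg :: "nat \<Rightarrow> (nat \<Rightarrow> nat) \<Rightarrow> (nat \<Rightarrow> nat)" where
  "compl_cfg d a = (\<lambda>i\<in>{0..<d}. 1 - a i)"

definition dotp :: "nat \<Rightarrow> (nat \<Rightarrow> nat) \<Rightarrow> (nat \<Rightarrow> nat) \<Rightarrow> nat" where
  "dotp d a b = (\<Sum>i<d. a i * b i)"

definition wt :: "nat \<Rightarrow> (nat \<Rightarrow> nat) \<Rightarrow> nat" where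
  "wt d b = (\<Sum>i<d. b i)"

definition loglin_int :: "nat \<Rightarrow> ((nat \<Rightarrow> nat) \<Rightarrow> real) \<Rightarrow> (nat \<Rightarrow> nat) \<Rightarrow> real" where
  "loglin_int d p b = (1 / 2 ^ d) * (\<Sum>a\<in>cfgs d. (-1::real) ^ (dotp d a b) * ln (p a))"

definition pair_vec :: "nat \<Rightarrow> nat \<Rightarrow> nat \<Rightarrow> (nat \<Rightarrow> nat)" where
  "pair_vec d s t = (\<lambda>i\<in>{0..<d}. if i = s \<or> i = t then 1 else 0)"

definition palindromic_ising :: "nat \<Rightarrow> nat set set \<Rightarrow> ((nat \<Rightarrow> nat) \<Rightarrow> real) set" where
  "palindromic_ising d E = {p.
     (\<forall>a\<in>cfgs d. 0 < p a) \<and> (\<Sum>a\<in>cfgs d. p a) = 1 \<and>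
     (\<forall>a\<in>cfgs d. p (compl_cfg d a) = p a) \<and>
     (\<forall>b\<in>cfgs d. 3 \<le> wt d b \<longrightarrow> loglin_int d p b = 0) \<and>
     (\<forall>s<d. \<forall>t<d. s \<noteq> t \<and> {s, t} \<notin> E \<longrightarrow> loglin_int d p (pair_vec d s t) = 0)}"

definition is_graph :: "nat \<Rightarrow> nat set set \<Rightarrow> bool" where
  "is_graph d E = (\<forall>e\<in>E. \<exists>s t. s \<noteq> t \<and> s < d \<and> t < d \<and> e = {s, t})"

definition complete_set :: "nat \<Rightarrow> nat set set \<Rightarrow> nat set \<Rightarrow> bool" where
  "complete_set d E K = (K \<subseteq> {0..<d} \<and> (\<forall>s\<in>K. \<forall>t\<in>K. s \<noteq> t \<longrightarrow> {s, t} \<in> E))"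

definition is_clique :: "nat \<Rightarrow> nat set set \<Rightarrow> nat set \<Rightarrow> bool" where
  "is_clique d E C = (complete_set d E C \<and> (\<forall>K. complete_set d E K \<and> C \<subseteq> K \<longrightarrow> K = C))"

text \<open>A perfect sequence (running intersection ordering) of all cliques; such a
  sequence exists iff the graph is decomposable.\<close>
definition perfect_clique_seq :: "nat \<Rightarrow> nat set set \<Rightarrow> nat set list \<Rightarrow> bool" where
  "perfect_clique_seq d E cs = (distinct cs \<and> set cs = {C. is_clique d E C} \<and>
     (\<forall>j. 0 < j \<and> j < length cs \<longrightarrow> (\<exists>i<j. cs ! j \<inter> \<Union>(set (take j cs)) \<subseteq> cs ! i)))"

definition sample_size :: "nat \<Rightarrow> ((nat \<Rightarrow> nat) \<Rightarrow> nat) \<Rightarrow> nat" where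
  "sample_size d n = (\<Sum>a\<in>cfgs d. n a)"

definition xi_hat :: "nat \<Rightarrow> ((nat \<Rightarrow> nat) \<Rightarrow> nat) \<Rightarrow> nat \<Rightarrow> nat \<Rightarrow> real" where
  "xi_hat d n s t = (\<Sum>a\<in>cfgs d. (-1::real) ^ (a s + a t) * real (n a)) / real (sample_size d n)"

text \<open>Closed-form symmetrized marginal on a set K of at most three nodes, in terms of xi:
  2^(-|K|) (1 + sum_{s<t in K} (-1)^(a_s+a_t) xi_st).\<close>
definition sym_marg_hat :: "nat \<Rightarrow> ((nat \<Rightarrow> nat) \<Rightarrow> nat) \<Rightarrow> nat set \<Rightarrow> (nat \<Rightarrow> nat) \<Rightarrow> real" where
  "sym_marg_hat d n K a =
     (1 + (\<Sum>s\<in>K. \<Sum>t\<in>K. if s < t then (-1::real) ^ (a s + a t) * xi_hat d n s t else 0))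
     / 2 ^ card K"

definition mle_formula :: "nat \<Rightarrow> ((nat \<Rightarrow> nat) \<Rightarrow> nat) \<Rightarrow> nat set list \<Rightarrow> (nat \<Rightarrow> nat) \<Rightarrow> real" where
  "mle_formula d n cs a =
     (\<Prod>j<length cs. sym_marg_hat d n (cs ! j) a
                     / sym_marg_hat d n (cs ! j \<inter> \<Union>(set (take j cs))) a)"

definition loglik :: "nat \<Rightarrow> ((nat \<Rightarrow> nat) \<Rightarrow> nat) \<Rightarrow> ((nat \<Rightarrow> nat) \<Rightarrow> real) \<Rightarrow> real" where
  "loglik d n p = (\<Sum>a\<in>cfgs d. real (n a) * ln (p a))"

end

theory Submission
  imports Defs
begin

text \<open>Write \<open>marg_poly d n C\<close> for \<open>2 ^ card C\<close> times the symmetrized marginal on a clique \<open>C\<close>,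
  a polynomial in the pair signs \<open>(-1) ^ (a s + a t)\<close>, \<open>s, t \<in> C\<close>. Averaging it over a flip of a node
  \<open>i\<close> deletes the pair signs through \<open>i\<close>; averaging over the nodes of a clique that are new in
  the perfect sequence therefore turns the clique factor into the separator factor. An induction
  along the sequence then shows that the product formula is a distribution whose pair moments on
  every clique, in particular on every edge, are the empirical \<open>xi_hat\<close>. Since every clique has
  at most three nodes, each factor of its logarithm depends on at most three nodes, so its
  interactions of even order \<open>\<ge> 4\<close> and on non-edges vanish; those of odd order vanish by
  palindromy.

  For a member \<open>p\<close> of the model, \<open>ln p\<close> is a combination of the constant and the edge pair
  signs, so the log-likelihood of \<open>p\<close> is the sample size times its cross entropy against the product
  formula, and Gibbs' inequality shows that the formula is the unique maximizer. Conversely, a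
  maximizer \<open>q\<close> satisfies the first-order conditions along exponential tilts in the direction of
  each edge, so \<open>q\<close> reproduces the empirical edge moments; the clique marginal polynomial is then
  a \<open>q\<close>-average of \<open>1 + \<Sum>\<open>s < t\<close> e s * e t\<close> with signs \<open>e\<close>, nonnegative for at most three nodes,
  so the positivity hypothesis of the second part holds automatically.\<close>

section \<open>Configurations and Walsh characters\<close>

lemma finite_cfgs: "finite (cfgs d)"
  unfolding cfgs_def by (simp add: finite_PiE)

lemma card_cfgs: "card (cfgs d) = 2 ^ d"
  unfolding cfgs_def by (simp add: card_PiE numeral_2_eq_2)

lemma cfgs_binary: "a \<in> cfgs d \<Longrightarrow> i < d \<Longrightarrow> a i = 0 \<or> a i = 1"
  unfolding cfgs_def by auto

lemma cfgs_undefined: "a \<in> cfgs d \<Longrightarrow> \<not> i < d \<Longrightarrow> a i = undefined"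
  unfolding cfgs_def by auto

definition flip_at :: "nat \<Rightarrow> (nat \<Rightarrow> nat) \<Rightarrow> (nat \<Rightarrow> nat)" where
  "flip_at i a = a(i := 1 - a i)"

lemma flip_at_in_cfgs: "a \<in> cfgs d \<Longrightarrow> i < d \<Longrightarrow> flip_at i a \<in> cfgs d"
  unfolding cfgs_def flip_at_def by (auto simp: PiE_iff extensional_def)

lemma flip_at_flip_at: "a \<in> cfgs d \<Longrightarrow> i < d \<Longrightarrow> flip_at i (flip_at i a) = a"
  using cfgs_binary[of a d i] unfolding flip_at_def by auto

lemma sum_cfgs_flip_at: "i < d \<Longrightarrow> (\<Sum>a\<in>cfgs d. f (flip_at i a)) = (\<Sum>a\<in>cfgs d. (f a :: real))"
  by (rule sum.reindex_bij_witness[where i="flip_at i" and j="flip_at i"])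
     (auto simp: flip_at_flip_at flip_at_in_cfgs)

lemma compl_cfg_in_cfgs: "a \<in> cfgs d \<Longrightarrow> compl_cfg d a \<in> cfgs d"
  unfolding cfgs_def compl_cfg_def by (auto simp: PiE_iff)

lemma compl_cfg_compl_cfg: "a \<in> cfgs d \<Longrightarrow> compl_cfg d (compl_cfg d a) = a"
  using cfgs_binary[of a d] cfgs_undefined[of a d] unfolding compl_cfg_def by fastforce

lemma sum_cfgs_compl_cfg: "(\<Sum>a\<in>cfgs d. f (compl_cfg d a)) = (\<Sum>a\<in>cfgs d. (f a :: real))"
  by (rule sum.reindex_bij_witness[where i="compl_cfg d" and j="compl_cfg d"])
     (auto simp: compl_cfg_compl_cfg compl_cfg_in_cfgs)

definition depends_only_on :: "nat \<Rightarrow> nat set \<Rightarrow> ((nat \<Rightarrow> nat) \<Rightarrow> real) \<Rightarrow> bool" where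
  "depends_only_on d K f \<longleftrightarrow> (\<forall>a\<in>cfgs d. \<forall>a'\<in>cfgs d. (\<forall>i\<in>K. a i = a' i) \<longrightarrow> f a = f a')"

lemma depends_only_onD:
  "depends_only_on d K f \<Longrightarrow> a \<in> cfgs d \<Longrightarrow> a' \<in> cfgs d \<Longrightarrow> (\<And>i. i \<in> K \<Longrightarrow> a i = a' i) \<Longrightarrow> f a = f a'"
  unfolding depends_only_on_def by blast

lemma depends_only_onI:
  "(\<And>a a'. a \<in> cfgs d \<Longrightarrow> a' \<in> cfgs d \<Longrightarrow> (\<And>i. i \<in> K \<Longrightarrow> a i = a' i) \<Longrightarrow> f a = f a')
   \<Longrightarrow> depends_only_on d K f"
  unfolding depends_only_on_def by blast

lemma depends_only_on_flip_at:
  assumes "depends_only_on d K f" "a \<in> cfgs d" "i < d" "i \<notin> K"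
  shows "f (flip_at i a) = f a"
  by (rule sym, rule depends_only_onD[OF assms(1) assms(2) flip_at_in_cfgs[OF assms(2,3)]])
     (use assms(4) in \<open>auto simp: flip_at_def\<close>)

lemma depends_only_on_mono: "depends_only_on d K f \<Longrightarrow> K \<subseteq> K' \<Longrightarrow> depends_only_on d K' f"
  by (rule depends_only_onI, erule depends_only_onD) auto

lemma depends_only_on_binop:
  "depends_only_on d K f \<Longrightarrow> depends_only_on d K g \<Longrightarrow> depends_only_on d K (\<lambda>a. H (f a) (g a))"
  by (rule depends_only_onI) (metis depends_only_onD)

lemma depends_only_on_comp: "depends_only_on d K f \<Longrightarrow> depends_only_on d K (\<lambda>a. H (f a))"
  using depends_only_on_binop[of d K f f "\<lambda>x y. H x"] by simp

lemma depends_only_on_const: "depends_only_on d K (\<lambda>a. c)"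
  by (rule depends_only_onI) simp

lemma depends_only_on_prod:
  "(\<And>j. j \<in> J \<Longrightarrow> depends_only_on d K (f j)) \<Longrightarrow> depends_only_on d K (\<lambda>a. \<Prod>j\<in>J. f j a)"
  by (rule depends_only_onI, rule prod.cong[OF refl]) (rule depends_only_onD)

definition walsh :: "nat \<Rightarrow> (nat \<Rightarrow> nat) \<Rightarrow> (nat \<Rightarrow> nat) \<Rightarrow> real" where
  "walsh d b a = (-1) ^ dotp d a b"

lemma dotp_commute: "dotp d a b = dotp d b a"
  unfolding dotp_def by (simp add: mult.commute)

lemma walsh_commute: "walsh d b a = walsh d a b"
  unfolding walsh_def by (simp add: dotp_commute)

lemma walsh_flip_at:
  assumes "a \<in> cfgs d" "b \<in> cfgs d" "i < d"
  shows "walsh d b (flip_at i a) = (-1) ^ b i * walsh d b a"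
proof -
  have fin: "finite {..<d}" and i: "i \<in> {..<d}" using assms by simp_all
  have e1: "dotp d (flip_at i a) b = (1 - a i) * b i + (\<Sum>j\<in>{..<d}-{i}. a j * b j)"
    unfolding dotp_def using sum.remove[OF fin i, of "\<lambda>j. flip_at i a j * b j"]
    by (simp add: flip_at_def)
  have e2: "dotp d a b = a i * b i + (\<Sum>j\<in>{..<d}-{i}. a j * b j)"
    unfolding dotp_def using sum.remove[OF fin i, of "\<lambda>j. a j * b j"] by simp
  show ?thesis
    unfolding walsh_def e1 e2 using cfgs_binary[OF assms(1,3)] cfgs_binary[OF assms(2,3)]
    by (auto simp: power_add)
qed

lemma sum_walsh_mult_eq_0:
  assumes b: "b \<in> cfgs d" and i: "i < d" "b i = 1"
    and h: "depends_only_on d K h" and iK: "i \<notin> K"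
  shows "(\<Sum>a\<in>cfgs d. walsh d b a * h a) = 0"
proof -
  let ?S = "\<Sum>a\<in>cfgs d. walsh d b a * h a"
  have "?S = (\<Sum>a\<in>cfgs d. walsh d b (flip_at i a) * h (flip_at i a))"
    using sum_cfgs_flip_at[OF i(1), of "\<lambda>a. walsh d b a * h a"] by simp
  also have "\<dots> = - ?S"
    by (simp add: walsh_flip_at[OF _ b i(1)] i(2) depends_only_on_flip_at[OF h _ i(1) iK]
        flip: sum_negf)
  finally show ?thesis by simp
qed

lemma wt_eq_card:
  assumes "b \<in> cfgs d"
  shows "wt d b = card {i\<in>{..<d}. b i = 1}"
proof -
  have "card {i\<in>{..<d}. b i = 1} = (\<Sum>i<d. if b i = 1 then 1 else 0)"
    by (simp add: sum.inter_filter[symmetric])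
  also have "\<dots> = wt d b"
    unfolding wt_def using cfgs_binary[OF assms] by (intro sum.cong) auto
  finally show ?thesis by simp
qed

lemma sum_walsh_eq_0:
  assumes "b \<in> cfgs d" "0 < wt d b"
  shows "(\<Sum>a\<in>cfgs d. walsh d b a) = 0"
proof -
  obtain i where "i < d" "b i = 1"
    using assms wt_eq_card[OF assms(1)] by (metis (mono_tags, lifting) card.empty
        empty_Collect_eq lessThan_iff less_irrefl)
  then show ?thesis
    using sum_walsh_mult_eq_0[OF assms(1) _ _ depends_only_on_const[of d "{}" 1]] by simp
qed

lemma walsh_orthogonal:
  assumes "b \<in> cfgs d" "c \<in> cfgs d"
  shows "(\<Sum>a\<in>cfgs d. walsh d b a * walsh d c a) = (if b = c then 2 ^ d else 0)"
proof (cases "b = c")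
  case True
  then show ?thesis
    by (simp add: walsh_def card_cfgs power_mult_distrib[symmetric] flip: power_add)
next
  case False
  then obtain i where i: "b i \<noteq> c i" by auto
  have id: "i < d" using i cfgs_undefined[OF assms(1)] cfgs_undefined[OF assms(2)] by metis
  have sign: "(-1::real) ^ b i * (-1) ^ c i = -1"
    using i cfgs_binary[OF assms(1) id] cfgs_binary[OF assms(2) id] by auto
  let ?S = "\<Sum>a\<in>cfgs d. walsh d b a * walsh d c a"
  have "?S = (\<Sum>a\<in>cfgs d. walsh d b (flip_at i a) * walsh d c (flip_at i a))"
    using sum_cfgs_flip_at[OF id, of "\<lambda>a. walsh d b a * walsh d c a"] by simp
  also have "\<dots> = (\<Sum>a\<in>cfgs d. ((-1) ^ b i * (-1) ^ c i) * (walsh d b a * walsh d c a))"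
    by (intro sum.cong refl) (simp add: walsh_flip_at assms id ac_simps)
  also have "\<dots> = - ?S" by (simp add: sign sum_negf)
  finally show ?thesis using False by simp
qed

lemma loglin_int_walsh: "loglin_int d p b = (\<Sum>a\<in>cfgs d. walsh d b a * ln (p a)) / 2 ^ d"
  unfolding loglin_int_def walsh_def by simp

lemma ln_eq_sum_loglin_int:
  assumes a: "a \<in> cfgs d"
  shows "ln (p a) = (\<Sum>b\<in>cfgs d. loglin_int d p b * walsh d b a)"
proof -
  have "(\<Sum>b\<in>cfgs d. loglin_int d p b * walsh d b a)
      = (\<Sum>a'\<in>cfgs d. ln (p a') * (\<Sum>b\<in>cfgs d. walsh d a' b * walsh d a b)) / 2 ^ d"
    unfolding loglin_int_walsh sum_divide_distrib sum_distrib_left sum_distrib_right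
    by (subst sum.swap) (simp add: walsh_commute ac_simps)
  also have "\<dots> = (\<Sum>a'\<in>cfgs d. if a' = a then ln (p a) * 2 ^ d else 0) / 2 ^ d"
    by (intro arg_cong[where f="\<lambda>x. x / 2 ^ d"] sum.cong refl) (auto simp: walsh_orthogonal a)
  also have "\<dots> = ln (p a)" using a finite_cfgs by simp
  finally show ?thesis by simp
qed

lemma walsh_compl_cfg:
  assumes "a \<in> cfgs d" "b \<in> cfgs d"
  shows "walsh d b (compl_cfg d a) = (-1) ^ wt d b * walsh d b a"
proof -
  have "dotp d (compl_cfg d a) b + dotp d a b = wt d b"
    unfolding dotp_def wt_def sum.distrib[symmetric]
  proof (intro sum.cong refl)
    fix i assume "i \<in> {..<d}"
    then show "compl_cfg d a i * b i + a i * b i = b i"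
      using cfgs_binary[OF assms(1), of i] by (auto simp: compl_cfg_def)
  qed
  then have "(-1::real) ^ wt d b * walsh d b a
      = (-1) ^ dotp d (compl_cfg d a) b * ((-1) ^ dotp d a b * (-1) ^ dotp d a b)"
    unfolding walsh_def by (metis mult.assoc power_add)
  then show ?thesis unfolding walsh_def by (simp flip: power_add)
qed

lemma loglin_int_odd_wt_eq_0:
  assumes pal: "\<forall>a\<in>cfgs d. p (compl_cfg d a) = p a"
    and b: "b \<in> cfgs d" and odd: "odd (wt d b)"
  shows "loglin_int d p b = 0"
proof -
  let ?S = "\<Sum>a\<in>cfgs d. walsh d b a * ln (p a)"
  have "?S = (\<Sum>a\<in>cfgs d. walsh d b (compl_cfg d a) * ln (p (compl_cfg d a)))"
    using sum_cfgs_compl_cfg[of "\<lambda>a. walsh d b a * ln (p a)" d] by simp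
  also have "\<dots> = - ?S"
    by (simp add: walsh_compl_cfg b pal odd flip: sum_negf)
  finally show ?thesis unfolding loglin_int_walsh by simp
qed

lemma pair_vec_in_cfgs: "pair_vec d s t \<in> cfgs d"
  unfolding pair_vec_def cfgs_def by auto

lemma dotp_pair_vec:
  assumes "s < d" "t < d" "s \<noteq> t"
  shows "dotp d a (pair_vec d s t) = a s + a t"
proof -
  have "dotp d a (pair_vec d s t) = (\<Sum>i<d. if i \<in> {s,t} then a i else 0)"
    unfolding dotp_def pair_vec_def by (intro sum.cong) auto
  also have "\<dots> = (\<Sum>i\<in>{i\<in>{..<d}. i \<in> {s,t}}. a i)"
    by (subst sum.inter_filter) auto
  also have "{i\<in>{..<d}. i \<in> {s,t}} = {s,t}" using assms by auto
  finally show ?thesis using assms by simp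
qed

lemma wt_pair_vec: "s < d \<Longrightarrow> t < d \<Longrightarrow> s \<noteq> t \<Longrightarrow> wt d (pair_vec d s t) = 2"
  using dotp_pair_vec[of s d t "\<lambda>_. 1"] unfolding dotp_def wt_def by simp

lemma wt_eq_2_imp_pair_vec:
  assumes b: "b \<in> cfgs d" and w: "wt d b = 2"
  obtains s t where "s < d" "t < d" "s \<noteq> t" "b = pair_vec d s t"
proof -
  obtain s t where st: "{i\<in>{..<d}. b i = 1} = {s,t}" "s \<noteq> t"
    using wt_eq_card[OF b] w by (metis card_2_iff)
  then have m: "i \<in> {s,t} \<longleftrightarrow> i < d \<and> b i = 1" for i by blast
  have "b = pair_vec d s t"
  proof
    fix i show "b i = pair_vec d s t i"
      using cfgs_binary[OF b, of i] cfgs_undefined[OF b, of i] m[of i]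
      unfolding pair_vec_def by auto
  qed
  with m[of s] m[of t] st(2) show thesis by (intro that) auto
qed

lemma pair_vec_eq_iff:
  assumes "u < d" "v < d" "s < d" "t < d"
  shows "pair_vec d u v = pair_vec d s t \<longleftrightarrow> {u,v} = {s,t}"
proof
  assume eq: "pair_vec d u v = pair_vec d s t"
  have "(i = u \<or> i = v) \<longleftrightarrow> (i = s \<or> i = t)" if "i < d" for i
    using fun_cong[OF eq, of i] that unfolding pair_vec_def by (auto split: if_splits)
  then show "{u,v} = {s,t}" using assms by blast
qed (auto simp: pair_vec_def doubleton_eq_iff)

section \<open>Pair signs and marginal polynomials\<close>

definition pair_sign :: "nat \<Rightarrow> nat \<Rightarrow> (nat \<Rightarrow> nat) \<Rightarrow> real" where
  "pair_sign s t a = (-1) ^ (a s + a t)"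

lemma walsh_pair_vec: "s < d \<Longrightarrow> t < d \<Longrightarrow> s \<noteq> t \<Longrightarrow> walsh d (pair_vec d s t) a = pair_sign s t a"
  unfolding walsh_def pair_sign_def by (simp add: dotp_pair_vec)

lemma pair_sign_flip_at:
  assumes "a \<in> cfgs d" "i < d" "s \<noteq> t"
  shows "pair_sign s t (flip_at i a) = (if i = s \<or> i = t then - pair_sign s t a else pair_sign s t a)"
  using cfgs_binary[OF assms(1,2)] assms(3) unfolding pair_sign_def flip_at_def
  by (auto simp: power_add)

lemma pair_sign_compl_cfg:
  assumes "a \<in> cfgs d" "s < d" "t < d"
  shows "pair_sign s t (compl_cfg d a) = pair_sign s t a"
  using cfgs_binary[OF assms(1,2)] cfgs_binary[OF assms(1,3)] assms
  unfolding pair_sign_def compl_cfg_def by auto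

lemma pair_sign_square: "pair_sign s t a * pair_sign s t a = 1"
  unfolding pair_sign_def by (simp flip: power_add)

lemma pair_sign_commute: "pair_sign s t a = pair_sign t s a"
  unfolding pair_sign_def by (simp add: add.commute)

lemma xi_hat_commute: "xi_hat d n s t = xi_hat d n t s"
  unfolding xi_hat_def by (simp add: add.commute)

lemma depends_only_on_pair_sign: "s \<in> K \<Longrightarrow> t \<in> K \<Longrightarrow> depends_only_on d K (pair_sign s t)"
  by (rule depends_only_onI) (simp add: pair_sign_def)

lemma sum_pair_sign_eq_0:
  assumes "s < d" "t < d" "s \<noteq> t"
  shows "(\<Sum>a\<in>cfgs d. pair_sign s t a) = 0"
  using sum_walsh_eq_0[OF pair_vec_in_cfgs, of d s t] assms
  by (simp add: wt_pair_vec walsh_pair_vec)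

lemma sum_pair_sign_mult:
  assumes "s < d" "t < d" "u < d" "v < d" "s < t" "u < v"
  shows "(\<Sum>a\<in>cfgs d. pair_sign s t a * pair_sign u v a) = (if s = u \<and> t = v then 2 ^ d else 0)"
proof -
  have "pair_vec d s t = pair_vec d u v \<longleftrightarrow> s = u \<and> t = v"
    using assms by (auto simp: pair_vec_eq_iff doubleton_eq_iff)
  then show ?thesis
    using walsh_orthogonal[OF pair_vec_in_cfgs pair_vec_in_cfgs, of d s t u v] assms
    by (simp add: walsh_pair_vec)
qed

definition pair_poly :: "(nat \<Rightarrow> nat \<Rightarrow> real) \<Rightarrow> nat set \<Rightarrow> (nat \<Rightarrow> nat) \<Rightarrow> real" where
  "pair_poly c K a = 1 + (\<Sum>s\<in>K. \<Sum>t\<in>K. if s < t then pair_sign s t a * c s t else 0)"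

abbreviation marg_poly :: "nat \<Rightarrow> ((nat \<Rightarrow> nat) \<Rightarrow> nat) \<Rightarrow> nat set \<Rightarrow> (nat \<Rightarrow> nat) \<Rightarrow> real" where
  "marg_poly d n \<equiv> pair_poly (xi_hat d n)"

lemma sym_marg_hat_eq_marg_poly: "sym_marg_hat d n K a = marg_poly d n K a / 2 ^ card K"
  unfolding sym_marg_hat_def pair_poly_def pair_sign_def ..

lemma pair_poly_empty: "pair_poly c {} a = 1"
  unfolding pair_poly_def by simp

lemma pair_poly_compl_cfg:
  "K \<subseteq> {..<d} \<Longrightarrow> a \<in> cfgs d \<Longrightarrow> pair_poly c K (compl_cfg d a) = pair_poly c K a"
  unfolding pair_poly_def
  by (intro arg_cong[where f="\<lambda>x. 1 + x"] sum.cong refl) (auto simp: pair_sign_compl_cfg subset_eq)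

lemma depends_only_on_pair_poly: "depends_only_on d K (pair_poly c K)"
  unfolding pair_poly_def pair_sign_def
  by (rule depends_only_onI) (intro arg_cong[where f="\<lambda>x. 1 + x"] sum.cong refl, simp)

lemma sum_mult_pair_poly:
  "(\<Sum>a\<in>A. w a * pair_poly c K a) = (\<Sum>a\<in>A. w a) +
     (\<Sum>s\<in>K. \<Sum>t\<in>K. if s < t then (\<Sum>a\<in>A. w a * pair_sign s t a) * c s t else 0)"
proof -
  have "(\<Sum>a\<in>A. w a * pair_poly c K a) = (\<Sum>a\<in>A. w a) +
     (\<Sum>a\<in>A. \<Sum>s\<in>K. \<Sum>t\<in>K. if s < t then w a * pair_sign s t a * c s t else 0)"
    unfolding pair_poly_def distrib_left sum.distrib
    by (simp add: sum_distrib_left if_distrib[of "\<lambda>x. w _ * x"] ac_simps cong: if_cong)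
  also have "(\<Sum>a\<in>A. \<Sum>s\<in>K. \<Sum>t\<in>K. if s < t then w a * pair_sign s t a * c s t else 0)
      = (\<Sum>s\<in>K. \<Sum>t\<in>K. \<Sum>a\<in>A. if s < t then w a * pair_sign s t a * c s t else 0)"
    by (subst sum.swap, rule sum.cong[OF refl], rule sum.swap)
  also have "\<dots> = (\<Sum>s\<in>K. \<Sum>t\<in>K. if s < t then (\<Sum>a\<in>A. w a * pair_sign s t a) * c s t else 0)"
    by (intro sum.cong refl) (auto simp: sum_distrib_right)
  finally show ?thesis .
qed

lemma sum_pair_poly:
  assumes "K \<subseteq> {..<d}"
  shows "(\<Sum>a\<in>cfgs d. pair_poly c K a) = 2 ^ d"
proof -
  have "(\<Sum>s\<in>K. \<Sum>t\<in>K. if s < t then (\<Sum>a\<in>cfgs d. 1 * pair_sign s t a) * c s t else 0) = 0"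
    using assms by (intro sum.neutral ballI) (auto simp: sum_pair_sign_eq_0 subset_eq)
  then show ?thesis
    using sum_mult_pair_poly[where w="\<lambda>_. 1" and A="cfgs d" and c=c and K=K]
    by (simp add: card_cfgs)
qed

lemma sum_pair_sign_mult_marg_poly:
  assumes "K \<subseteq> {..<d}" "finite K" "s \<in> K" "t \<in> K" "s \<noteq> t"
  shows "(\<Sum>a\<in>cfgs d. pair_sign s t a * marg_poly d n K a) = 2 ^ d * xi_hat d n s t"
proof -
  have ordered: "(\<Sum>a\<in>cfgs d. pair_sign s t a * marg_poly d n K a) = 2 ^ d * xi_hat d n s t"
    if st: "s \<in> K" "t \<in> K" "s < t" for s t
  proof -
    have "\<forall>u\<in>K. \<forall>v\<in>K.
        (if u < v then (\<Sum>a\<in>cfgs d. pair_sign s t a * pair_sign u v a) * xi_hat d n u v else 0)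
        = (if u = s then if v = t then 2 ^ d * xi_hat d n s t else 0 else 0)"
      using assms(1) st sum_pair_sign_mult[of s d t] by (auto simp: subset_eq)
    then have "(\<Sum>u\<in>K. \<Sum>v\<in>K. if u < v then (\<Sum>a\<in>cfgs d. pair_sign s t a * pair_sign u v a) * xi_hat d n u v else 0)
        = (\<Sum>u\<in>K. if u = s then 2 ^ d * xi_hat d n s t else 0)"
      using assms(2) st by (intro sum.cong refl) (auto simp: sum.delta)
    also have "\<dots> = 2 ^ d * xi_hat d n s t"
      using assms(2) st by (simp add: sum.delta)
    finally show ?thesis
      using assms(1) st sum_mult_pair_poly[where w="pair_sign s t" and A="cfgs d" and c="xi_hat d n" and K=K]
      by (simp add: sum_pair_sign_eq_0 subset_eq)
  qed
  show ?thesis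
    using ordered[of s t] ordered[of t s] assms(3-5)
    by (cases "s < t") (auto simp: pair_sign_commute[of s t] xi_hat_commute[of d n s t])
qed

section \<open>Averaging over flips\<close>

definition flip_avg :: "nat \<Rightarrow> ((nat \<Rightarrow> nat) \<Rightarrow> real) \<Rightarrow> (nat \<Rightarrow> nat) \<Rightarrow> real" where
  "flip_avg i f a = (f a + f (flip_at i a)) / 2"

fun flip_avg_list :: "nat list \<Rightarrow> ((nat \<Rightarrow> nat) \<Rightarrow> real) \<Rightarrow> (nat \<Rightarrow> nat) \<Rightarrow> real" where
  "flip_avg_list [] f = f"
| "flip_avg_list (i # is) f = flip_avg i (flip_avg_list is f)"

lemma sum_mult_flip_avg_list:
  assumes "set is \<subseteq> {..<d}" "depends_only_on d K F" "set is \<inter> K = {}"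
  shows "(\<Sum>a\<in>cfgs d. F a * flip_avg_list is G a) = (\<Sum>a\<in>cfgs d. F a * G a)"
  using assms(1,3)
proof (induction "is")
  case (Cons i "is")
  then have i: "i < d" "i \<notin> K" by auto
  have "(\<Sum>a\<in>cfgs d. F a * H (flip_at i a)) = (\<Sum>a\<in>cfgs d. F a * H a)" for H
    using sum_cfgs_flip_at[OF i(1), of "\<lambda>a. F a * H a"]
    by (simp add: depends_only_on_flip_at[OF assms(2) _ i])
  then show ?case using Cons
    by (simp add: flip_avg_def distrib_left sum.distrib add_divide_distrib
        flip: sum_divide_distrib)
qed simp

lemma flip_avg_list_mult:
  assumes "set is \<subseteq> {..<d}" "depends_only_on d K F" "set is \<inter> K = {}" "a \<in> cfgs d"
  shows "flip_avg_list is (\<lambda>a. F a * G a) a = F a * flip_avg_list is G a"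
  using assms(1,3,4)
proof (induction "is" arbitrary: a)
  case (Cons i "is")
  then have i: "i < d" "i \<notin> K" by auto
  then show ?case
    using Cons flip_at_in_cfgs[OF Cons.prems(3) i(1)]
    by (simp add: flip_avg_def distrib_left depends_only_on_flip_at[OF assms(2) _ i])
qed simp

lemma depends_only_on_flip_avg:
  assumes i: "i < d" and f: "depends_only_on d K f"
  shows "depends_only_on d (K - {i}) (flip_avg i f)"
proof (rule depends_only_onI)
  fix a a' assume a: "a \<in> cfgs d" and a': "a' \<in> cfgs d"
    and agree: "\<And>j. j \<in> K - {i} \<Longrightarrow> a j = a' j"
  have fa: "flip_at i a \<in> cfgs d" and fa': "flip_at i a' \<in> cfgs d"
    using flip_at_in_cfgs a a' i by auto
  show "flip_avg i f a = flip_avg i f a'"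
  proof (cases "a i = a' i")
    case True
    have "f a = f a'" by (rule depends_only_onD[OF f a a']) (use agree True in blast)
    moreover have "f (flip_at i a) = f (flip_at i a')"
      by (rule depends_only_onD[OF f fa fa']) (use agree True in \<open>auto simp: flip_at_def\<close>)
    ultimately show ?thesis unfolding flip_avg_def by simp
  next
    case False
    then have e: "a' i = 1 - a i" "a i = 1 - a' i"
      using cfgs_binary[OF a i] cfgs_binary[OF a' i] by auto
    have "f a = f (flip_at i a')"
      by (rule depends_only_onD[OF f a fa']) (use agree e in \<open>auto simp: flip_at_def\<close>)
    moreover have "f (flip_at i a) = f a'"
      by (rule depends_only_onD[OF f fa a']) (use agree e in \<open>auto simp: flip_at_def\<close>)
    ultimately show ?thesis unfolding flip_avg_def by simp
  qed
qed

lemma depends_only_on_flip_avg_list: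
  assumes "set is \<subseteq> {..<d}" "depends_only_on d K f"
  shows "depends_only_on d (K - set is) (flip_avg_list is f)"
  using assms
proof (induction "is")
  case (Cons i "is")
  then have "depends_only_on d (K - set is - {i}) (flip_avg i (flip_avg_list is f))"
    by (intro depends_only_on_flip_avg) auto
  moreover have "K - set (i # is) = K - set is - {i}" by auto
  ultimately show ?case by simp
qed simp

lemma flip_avg_list_pos:
  assumes "set is \<subseteq> {..<d}" "\<forall>a\<in>cfgs d. 0 < f a" "a \<in> cfgs d"
  shows "0 < flip_avg_list is f a"
  using assms
proof (induction "is" arbitrary: a)
  case (Cons i "is")
  then show ?case by (auto simp: flip_avg_def flip_at_in_cfgs intro!: add_pos_pos)
qed simp

lemma flip_avg_pair_poly:
  assumes i: "i < d" and a: "a \<in> cfgs d" and fin: "finite K"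
  shows "flip_avg i (pair_poly c K) a = pair_poly c (K - {i}) a"
proof -
  define A where "A s t = (if s < t then pair_sign s t a * c s t else 0)" for s t
  define B where "B s t = (if s < t then pair_sign s t (flip_at i a) * c s t else 0)" for s t
  have AB: "(A s t + B s t) / 2 = (if s \<noteq> i then if t \<noteq> i then A s t else 0 else 0)" for s t
    unfolding A_def B_def using pair_sign_flip_at[OF a i, of s t] by auto
  have "flip_avg i (pair_poly c K) a = 1 + (\<Sum>s\<in>K. \<Sum>t\<in>K. (A s t + B s t) / 2)"
    unfolding flip_avg_def pair_poly_def A_def[symmetric] B_def[symmetric]
    by (simp add: sum.distrib field_simps flip: sum_divide_distrib)
  also have "\<dots> = 1 + (\<Sum>s\<in>K. if s \<noteq> i then (\<Sum>t\<in>K. if t \<noteq> i then A s t else 0) else 0)"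
    unfolding AB by (intro arg_cong[where f="\<lambda>x. 1 + x"] sum.cong refl) auto
  also have "\<dots> = 1 + (\<Sum>s\<in>K - {i}. \<Sum>t\<in>K - {i}. A s t)"
  proof -
    have "K - {i} = {s\<in>K. s \<noteq> i}" by auto
    then show ?thesis using fin by (simp add: sum.inter_filter)
  qed
  finally show ?thesis unfolding pair_poly_def A_def .
qed

lemma flip_avg_list_pair_poly:
  assumes "set is \<subseteq> {..<d}" "finite K" "a \<in> cfgs d"
  shows "flip_avg_list is (pair_poly c K) a = pair_poly c (K - set is) a"
  using assms
proof (induction "is" arbitrary: a)
  case (Cons i "is")
  then have i: "i < d" by simp
  have "flip_avg_list (i # is) (pair_poly c K) a = flip_avg i (pair_poly c (K - set is)) a"
    using Cons flip_at_in_cfgs[OF Cons.prems(3) i] by (simp add: flip_avg_def)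
  also have "\<dots> = pair_poly c (K - set is - {i}) a"
    using flip_avg_pair_poly[OF i Cons.prems(3)] Cons.prems(2) by simp
  also have "K - set is - {i} = K - set (i # is)" by auto
  finally show ?case .
qed simp

lemma sum_mult_pair_poly_subset:
  assumes "K \<subseteq> {..<d}" "finite K" "S \<subseteq> K" "depends_only_on d S h"
  shows "(\<Sum>a\<in>cfgs d. h a * pair_poly c K a) = (\<Sum>a\<in>cfgs d. h a * pair_poly c S a)"
proof -
  let ?is = "sorted_list_of_set (K - S)"
  have U: "set ?is = K - S" "set ?is \<subseteq> {..<d}" "set ?is \<inter> S = {}" using assms by auto
  have "(\<Sum>a\<in>cfgs d. h a * pair_poly c K a) = (\<Sum>a\<in>cfgs d. h a * flip_avg_list ?is (pair_poly c K) a)"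
    using sum_mult_flip_avg_list[OF U(2) assms(4) U(3)] by simp
  also have "\<dots> = (\<Sum>a\<in>cfgs d. h a * pair_poly c S a)"
    using flip_avg_list_pair_poly[OF U(2) assms(2)] U(1) assms(3)
    by (intro sum.cong refl) (simp add: Diff_Diff_Int Int_absorb1)
  finally show ?thesis .
qed

section \<open>Perfect sequences of cliques\<close>

lemma exists_clique_superset:
  assumes "complete_set d E K"
  obtains C where "is_clique d E C" "K \<subseteq> C"
proof -
  let ?A = "{K. complete_set d E K}"
  have "finite ?A"
    by (rule finite_subset[of _ "Pow {0..<d}"]) (auto simp: complete_set_def)
  then obtain C where "C \<in> ?A" "K \<subseteq> C" "\<forall>K'\<in>?A. C \<subseteq> K' \<longrightarrow> C = K'"
    using finite_has_maximal2[of ?A K] assms by auto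
  then show thesis by (intro that[of C]) (auto simp: is_clique_def)
qed

locale perfect_clique_order =
  fixes d :: nat and E :: "nat set set" and cs :: "nat set list"
  assumes perfect: "perfect_clique_seq d E cs"
begin

definition hist :: "nat \<Rightarrow> nat set" where
  "hist j = \<Union>(set (take j cs))"

definition sep :: "nat \<Rightarrow> nat set" where
  "sep j = cs ! j \<inter> hist j"

lemma in_set_cs_iff: "C \<in> set cs \<longleftrightarrow> is_clique d E C"
  using perfect unfolding perfect_clique_seq_def by auto

lemma clique_subset:
  assumes "C \<in> set cs"
  shows "C \<subseteq> {0..<d}" "finite C" "\<And>s t. s \<in> C \<Longrightarrow> t \<in> C \<Longrightarrow> s \<noteq> t \<Longrightarrow> {s,t} \<in> E"
  using assms unfolding in_set_cs_iff is_clique_def complete_set_def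
  by (auto intro: finite_subset)

lemma nth_cs_subset:
  assumes "j < length cs"
  shows "cs ! j \<subseteq> {..<d}"
  using clique_subset(1)[OF nth_mem[OF assms]] by auto

lemma finite_nth_cs: "j < length cs \<Longrightarrow> finite (cs ! j)"
  using clique_subset(2)[OF nth_mem] .

lemma hist_0: "hist 0 = {}"
  unfolding hist_def by simp

lemma hist_Suc: "j < length cs \<Longrightarrow> hist (Suc j) = hist j \<union> cs ! j"
  unfolding hist_def by (simp add: take_Suc_conv_app_nth Un_commute)

lemma hist_subset: "j \<le> length cs \<Longrightarrow> hist j \<subseteq> {..<d}"
proof (induction j)
  case (Suc j)
  then show ?case using hist_Suc[of j] nth_cs_subset[of j] by simp
qed (simp add: hist_0)

lemma nth_cs_subset_hist: "i < k \<Longrightarrow> k \<le> length cs \<Longrightarrow> cs ! i \<subseteq> hist k"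
  unfolding hist_def by (metis Union_upper in_set_conv_nth length_take min.absorb2 nth_take)

lemma sep_0: "sep 0 = {}"
  unfolding sep_def hist_0 by simp

lemma sep_subset_nth: "sep j \<subseteq> cs ! j"
  unfolding sep_def by auto

lemma sep_subset: "j < length cs \<Longrightarrow> sep j \<subseteq> {..<d}"
  using sep_subset_nth nth_cs_subset by blast

lemma sep_subset_earlier: "0 < j \<Longrightarrow> j < length cs \<Longrightarrow> \<exists>i<j. sep j \<subseteq> cs ! i"
  using perfect unfolding perfect_clique_seq_def sep_def hist_def by blast

lemma hist_length: "hist (length cs) = {..<d}"
proof
  show "hist (length cs) \<subseteq> {..<d}" using hist_subset by simp
  show "{..<d} \<subseteq> hist (length cs)"
  proof
    fix v assume "v \<in> {..<d}"
    then have "complete_set d E {v}" unfolding complete_set_def by auto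
    then obtain C where "is_clique d E C" "v \<in> C" by (auto elim: exists_clique_superset)
    then show "v \<in> hist (length cs)" unfolding hist_def in_set_cs_iff[symmetric] by auto
  qed
qed

lemma edge_in_clique:
  assumes "s < d" "t < d" "s \<noteq> t" "{s,t} \<in> E"
  obtains C where "C \<in> set cs" "s \<in> C" "t \<in> C"
proof -
  have "complete_set d E {s,t}" using assms unfolding complete_set_def by (auto simp: insert_commute)
  then show thesis by (elim exists_clique_superset) (auto simp: in_set_cs_iff intro: that)
qed

lemma cs_ne: "cs \<noteq> []"
proof -
  have "complete_set d E {}" unfolding complete_set_def by auto
  then show ?thesis by (elim exists_clique_superset) (auto simp: in_set_cs_iff[symmetric])
qed

lemma prod_card_sep_nth:
  "k \<le> length cs \<Longrightarrow> (\<Prod>j<k. (2::real) ^ card (sep j) / 2 ^ card (cs ! j)) = 1 / 2 ^ card (hist k)"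
proof (induction k)
  case (Suc k)
  then have k: "k < length cs" by simp
  have "card (hist k) + card (cs ! k) = card (hist (Suc k)) + card (sep k)"
    using card_Un_Int[OF finite_subset[OF hist_subset[of k]] finite_nth_cs[OF k]] k
    by (simp add: hist_Suc sep_def Int_commute)
  then have e: "(2::real) ^ card (hist (Suc k)) * 2 ^ card (sep k) = 2 ^ card (hist k) * 2 ^ card (cs ! k)"
    by (simp flip: power_add)
  have "(\<Prod>j<Suc k. (2::real) ^ card (sep j) / 2 ^ card (cs ! j))
      = (2 ^ card (hist (Suc k)) * 2 ^ card (sep k))
        / (2 ^ card (hist (Suc k)) * (2 ^ card (hist k) * 2 ^ card (cs ! k)))"
    using Suc k by (simp add: field_simps)
  then show ?case unfolding e by simp
qed (simp add: hist_0)

end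

section \<open>The product formula\<close>

locale positive_clique_marginals = perfect_clique_order +
  fixes n :: "(nat \<Rightarrow> nat) \<Rightarrow> nat"
  assumes sym_marg_hat_pos: "\<forall>C\<in>set cs. \<forall>a\<in>cfgs d. 0 < sym_marg_hat d n C a"
begin

definition new_nodes :: "nat \<Rightarrow> nat list" where
  "new_nodes k = sorted_list_of_set (cs ! k - hist k)"

definition factor :: "nat \<Rightarrow> (nat \<Rightarrow> nat) \<Rightarrow> real" where
  "factor j a = marg_poly d n (cs ! j) a / marg_poly d n (sep j) a"

definition partial_prod :: "nat \<Rightarrow> (nat \<Rightarrow> nat) \<Rightarrow> real" where
  "partial_prod k a = (\<Prod>j<k. factor j a)"

lemma set_new_nodes:
  assumes "k < length cs"
  shows "set (new_nodes k) = cs ! k - hist k" "set (new_nodes k) \<subseteq> {..<d}"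
    "set (new_nodes k) \<inter> hist k = {}" "set (new_nodes k) \<inter> sep k = {}"
  using finite_nth_cs[OF assms] nth_cs_subset[OF assms]
  unfolding new_nodes_def sep_def by auto

lemma marg_poly_nth_pos: "k < length cs \<Longrightarrow> a \<in> cfgs d \<Longrightarrow> 0 < marg_poly d n (cs ! k) a"
  using sym_marg_hat_pos by (auto simp: sym_marg_hat_eq_marg_poly zero_less_divide_iff)

lemma flip_avg_new_nodes_marg_poly:
  assumes "k < length cs" "a \<in> cfgs d"
  shows "flip_avg_list (new_nodes k) (marg_poly d n (cs ! k)) a = marg_poly d n (sep k) a"
proof -
  have "cs ! k - set (new_nodes k) = sep k" using set_new_nodes(1)[OF assms(1)] by (auto simp: sep_def)
  then show ?thesis
    using flip_avg_list_pair_poly[OF set_new_nodes(2)[OF assms(1)] finite_nth_cs[OF assms(1)] assms(2)]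
    by simp
qed

lemma marg_poly_sep_pos: "k < length cs \<Longrightarrow> a \<in> cfgs d \<Longrightarrow> 0 < marg_poly d n (sep k) a"
  using flip_avg_list_pos[OF set_new_nodes(2)] marg_poly_nth_pos flip_avg_new_nodes_marg_poly
  by metis

lemma depends_only_on_factor: "depends_only_on d (cs ! j) (factor j)"
  unfolding factor_def
  by (rule depends_only_on_binop[OF depends_only_on_pair_poly
        depends_only_on_mono[OF depends_only_on_pair_poly sep_subset_nth]])

lemma depends_only_on_partial_prod: "k \<le> length cs \<Longrightarrow> depends_only_on d (hist k) (partial_prod k)"
  unfolding partial_prod_def
  by (intro depends_only_on_prod depends_only_on_mono[OF depends_only_on_factor nth_cs_subset_hist]) auto

lemma partial_prod_pos: "k \<le> length cs \<Longrightarrow> a \<in> cfgs d \<Longrightarrow> 0 < partial_prod k a"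
  unfolding partial_prod_def factor_def
  by (intro prod_pos ballI divide_pos_pos marg_poly_nth_pos marg_poly_sep_pos) auto

lemma flip_avg_new_nodes_mult_factor:
  assumes k: "k < length cs" and a: "a \<in> cfgs d"
  shows "flip_avg_list (new_nodes k) (\<lambda>a. G a * factor k a) a
       = flip_avg_list (new_nodes k) (\<lambda>a. G a * marg_poly d n (cs ! k) a) a / marg_poly d n (sep k) a"
proof -
  have eq: "(\<lambda>a. G a * factor k a) = (\<lambda>a. 1 / marg_poly d n (sep k) a * (G a * marg_poly d n (cs ! k) a))"
    unfolding factor_def by auto
  show ?thesis
    unfolding eq flip_avg_list_mult[OF set_new_nodes(2)[OF k]
        depends_only_on_comp[OF depends_only_on_pair_poly, where H="\<lambda>x. 1 / x"] set_new_nodes(4)[OF k] a]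
    by simp
qed

text \<open>Averaged over the new nodes of \<open>cs ! k\<close>, which lie outside \<open>hist k\<close>, the \<open>k\<close>-th factor is \<open>1\<close>.\<close>

lemma sum_mult_factor:
  assumes k: "k < length cs" and F: "depends_only_on d (hist k) F"
  shows "(\<Sum>a\<in>cfgs d. F a * factor k a) = (\<Sum>a\<in>cfgs d. F a)"
proof -
  have avg: "flip_avg_list (new_nodes k) (factor k) a = 1" if a: "a \<in> cfgs d" for a
    using flip_avg_new_nodes_mult_factor[OF k a, of "\<lambda>_. 1"] flip_avg_new_nodes_marg_poly[OF k a]
      marg_poly_sep_pos[OF k a]
    by simp
  have "(\<Sum>a\<in>cfgs d. F a * factor k a) = (\<Sum>a\<in>cfgs d. F a * flip_avg_list (new_nodes k) (factor k) a)"
    using sum_mult_flip_avg_list[OF set_new_nodes(2)[OF k] F set_new_nodes(3)[OF k]] by simp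
  also have "\<dots> = (\<Sum>a\<in>cfgs d. F a)"
    by (intro sum.cong refl) (simp add: avg)
  finally show ?thesis .
qed

lemma partial_prod_Suc: "partial_prod (Suc k) a = partial_prod k a * factor k a"
  unfolding partial_prod_def by simp

lemma sum_mult_partial_prod_Suc_earlier:
  assumes k: "k < length cs" and i: "i < k" and g: "depends_only_on d (cs ! i) g"
  shows "(\<Sum>a\<in>cfgs d. g a * partial_prod (Suc k) a) = (\<Sum>a\<in>cfgs d. g a * partial_prod k a)"
proof -
  have k': "k \<le> length cs" using k by simp
  have "depends_only_on d (hist k) (\<lambda>a. g a * partial_prod k a)"
    by (rule depends_only_on_binop[OF depends_only_on_mono[OF g nth_cs_subset_hist[OF i k']]
          depends_only_on_partial_prod[OF k']])
  then show ?thesis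
    unfolding partial_prod_Suc mult.assoc[symmetric] by (rule sum_mult_factor[OF k])
qed

lemma sum_mult_partial_prod_sep:
  assumes k: "k < length cs"
    and moments: "\<And>i g. i < k \<Longrightarrow> depends_only_on d (cs ! i) g \<Longrightarrow>
      (\<Sum>a\<in>cfgs d. g a * partial_prod k a) = (\<Sum>a\<in>cfgs d. g a * marg_poly d n (cs ! i) a)"
    and h: "depends_only_on d (sep k) h"
  shows "(\<Sum>a\<in>cfgs d. h a * partial_prod k a) = (\<Sum>a\<in>cfgs d. h a * marg_poly d n (sep k) a)"
proof (cases "k = 0")
  case True
  then show ?thesis by (simp add: partial_prod_def sep_0 pair_poly_empty)
next
  case False
  then obtain i where i: "i < k" "sep k \<subseteq> cs ! i" using sep_subset_earlier k by blast
  then have "(\<Sum>a\<in>cfgs d. h a * partial_prod k a) = (\<Sum>a\<in>cfgs d. h a * marg_poly d n (cs ! i) a)"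
    using moments depends_only_on_mono[OF h] by blast
  also have "\<dots> = (\<Sum>a\<in>cfgs d. h a * marg_poly d n (sep k) a)"
    using i k by (intro sum_mult_pair_poly_subset[OF nth_cs_subset finite_nth_cs i(2) h]) simp_all
  finally show ?thesis .
qed

lemma sum_mult_partial_prod_Suc_last:
  assumes k: "k < length cs"
    and sep_moment: "\<And>h. depends_only_on d (sep k) h \<Longrightarrow>
      (\<Sum>a\<in>cfgs d. h a * partial_prod k a) = (\<Sum>a\<in>cfgs d. h a * marg_poly d n (sep k) a)"
    and g: "depends_only_on d (cs ! k) g"
  shows "(\<Sum>a\<in>cfgs d. g a * partial_prod (Suc k) a) = (\<Sum>a\<in>cfgs d. g a * marg_poly d n (cs ! k) a)"
proof -
  let ?avg = "flip_avg_list (new_nodes k) (\<lambda>a. g a * marg_poly d n (cs ! k) a)"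
  have k': "k \<le> length cs" using k by simp
  have avg_dep: "depends_only_on d (sep k) ?avg"
    using depends_only_on_flip_avg_list[OF set_new_nodes(2)[OF k]
        depends_only_on_binop[OF g depends_only_on_pair_poly]] set_new_nodes(1)[OF k]
    by (simp add: sep_def Diff_Diff_Int Int_commute)
  have "(\<Sum>a\<in>cfgs d. g a * partial_prod (Suc k) a) = (\<Sum>a\<in>cfgs d. partial_prod k a * (g a * factor k a))"
    by (simp add: partial_prod_Suc ac_simps)
  also have "\<dots> = (\<Sum>a\<in>cfgs d. partial_prod k a * flip_avg_list (new_nodes k) (\<lambda>a. g a * factor k a) a)"
    by (rule sum_mult_flip_avg_list[OF set_new_nodes(2)[OF k] depends_only_on_partial_prod[OF k']
          set_new_nodes(3)[OF k], symmetric])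
  also have "\<dots> = (\<Sum>a\<in>cfgs d. ?avg a / marg_poly d n (sep k) a * partial_prod k a)"
    by (intro sum.cong refl) (simp add: flip_avg_new_nodes_mult_factor k)
  also have "\<dots> = (\<Sum>a\<in>cfgs d. ?avg a / marg_poly d n (sep k) a * marg_poly d n (sep k) a)"
    by (rule sep_moment[OF depends_only_on_binop[OF depends_only_on_binop[OF avg_dep depends_only_on_pair_poly]
          depends_only_on_pair_poly]])
  also have "\<dots> = (\<Sum>a\<in>cfgs d. 1 * ?avg a)"
    using marg_poly_sep_pos[OF k] by (intro sum.cong refl) (metis less_irrefl mult_1 nonzero_divide_eq_eq)
  also have "\<dots> = (\<Sum>a\<in>cfgs d. 1 * (g a * marg_poly d n (cs ! k) a))"
    by (rule sum_mult_flip_avg_list[OF set_new_nodes(2)[OF k] depends_only_on_const[of d "{}"]]) simp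
  finally show ?thesis by simp
qed

lemma sum_mult_partial_prod:
  assumes "k \<le> length cs" "i < k" "depends_only_on d (cs ! i) g"
  shows "(\<Sum>a\<in>cfgs d. g a * partial_prod k a) = (\<Sum>a\<in>cfgs d. g a * marg_poly d n (cs ! i) a)"
  using assms
proof (induction k arbitrary: i g)
  case (Suc k)
  then have k: "k < length cs" by simp
  show ?case
  proof (cases "i < k")
    case True
    then show ?thesis
      using sum_mult_partial_prod_Suc_earlier[OF k True Suc.prems(3)] Suc.IH[OF _ True Suc.prems(3)] k
      by simp
  next
    case False
    then have "i = k" using Suc.prems(2) by simp
    then show ?thesis
      using sum_mult_partial_prod_Suc_last[OF k sum_mult_partial_prod_sep[OF k]] Suc.IH k Suc.prems(3)
      by simp
  qed
qed simp

lemma mle_formula_eq_partial_prod: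
  "mle_formula d n cs a = partial_prod (length cs) a / 2 ^ d"
proof -
  have "mle_formula d n cs a = (\<Prod>j<length cs. factor j a * (2 ^ card (sep j) / 2 ^ card (cs ! j)))"
    unfolding mle_formula_def hist_def[symmetric] sep_def[symmetric]
    by (intro prod.cong refl) (simp add: sym_marg_hat_eq_marg_poly factor_def)
  also have "\<dots> = partial_prod (length cs) a * (\<Prod>j<length cs. (2::real) ^ card (sep j) / 2 ^ card (cs ! j))"
    unfolding partial_prod_def by (rule prod.distrib)
  also have "\<dots> = partial_prod (length cs) a / 2 ^ d"
    using prod_card_sep_nth[of "length cs"] hist_length by simp
  finally show ?thesis .
qed

lemma mle_formula_pos: "a \<in> cfgs d \<Longrightarrow> 0 < mle_formula d n cs a"
  by (simp add: mle_formula_eq_partial_prod partial_prod_pos)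

lemma sum_mle_formula: "(\<Sum>a\<in>cfgs d. mle_formula d n cs a) = 1"
proof -
  have "(\<Sum>a\<in>cfgs d. 1 * partial_prod (length cs) a) = (\<Sum>a\<in>cfgs d. 1 * marg_poly d n (cs ! 0) a)"
    using cs_ne by (intro sum_mult_partial_prod depends_only_on_const) auto
  also have "\<dots> = 2 ^ d"
    using cs_ne by (simp add: sum_pair_poly nth_cs_subset)
  finally show ?thesis by (simp add: mle_formula_eq_partial_prod flip: sum_divide_distrib)
qed

lemma sum_mle_formula_pair_sign:
  assumes "s < d" "t < d" "s \<noteq> t" "{s,t} \<in> E"
  shows "(\<Sum>a\<in>cfgs d. mle_formula d n cs a * pair_sign s t a) = xi_hat d n s t"
proof -
  obtain C where C: "C \<in> set cs" "s \<in> C" "t \<in> C" using edge_in_clique[OF assms] .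
  then obtain i where i: "i < length cs" "cs ! i = C" by (auto simp: in_set_conv_nth)
  have "(\<Sum>a\<in>cfgs d. pair_sign s t a * partial_prod (length cs) a)
      = (\<Sum>a\<in>cfgs d. pair_sign s t a * marg_poly d n C a)"
    using sum_mult_partial_prod[OF order.refl i(1)] depends_only_on_pair_sign[OF C(2,3)] i(2) by simp
  also have "\<dots> = 2 ^ d * xi_hat d n s t"
    using sum_pair_sign_mult_marg_poly[OF nth_cs_subset[OF i(1)] finite_nth_cs[OF i(1)]] C(2,3) i(2) assms(3)
    by simp
  finally show ?thesis
    by (simp add: mle_formula_eq_partial_prod ac_simps flip: sum_divide_distrib)
qed

lemma mle_formula_compl_cfg:
  "a \<in> cfgs d \<Longrightarrow> mle_formula d n cs (compl_cfg d a) = mle_formula d n cs a"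
  unfolding mle_formula_eq_partial_prod partial_prod_def factor_def
  by (intro arg_cong[where f="\<lambda>x. x / 2 ^ d"] prod.cong refl)
     (simp add: pair_poly_compl_cfg nth_cs_subset sep_subset)

text \<open>The logarithm of the product formula is a sum of functions of single cliques.\<close>

lemma loglin_int_mle_formula_eq_0:
  assumes b: "b \<in> cfgs d" and outside: "\<forall>j<length cs. \<exists>i<d. b i = 1 \<and> i \<notin> cs ! j"
  shows "loglin_int d (mle_formula d n cs) b = 0"
proof -
  have ln_mle: "ln (mle_formula d n cs a) = (\<Sum>j<length cs. ln (factor j a)) - ln (2 ^ d)"
    if a: "a \<in> cfgs d" for a
  proof -
    have factor_pos: "0 < factor j a" if "j < length cs" for j
      using that by (simp add: factor_def marg_poly_nth_pos marg_poly_sep_pos a)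
    have "ln (mle_formula d n cs a) = ln (partial_prod (length cs) a) - ln (2 ^ d)"
      using partial_prod_pos[OF order.refl a] by (simp add: mle_formula_eq_partial_prod ln_div)
    also have "ln (partial_prod (length cs) a) = (\<Sum>j<length cs. ln (factor j a))"
      unfolding partial_prod_def by (rule ln_prod) (auto dest: factor_pos)
    finally show ?thesis .
  qed
  have factor_coeff: "(\<Sum>a\<in>cfgs d. walsh d b a * ln (factor j a)) = 0" if j: "j < length cs" for j
  proof -
    obtain i where "i < d" "b i = 1" "i \<notin> cs ! j" using outside j by blast
    then show ?thesis
      by (intro sum_walsh_mult_eq_0[OF b _ _ depends_only_on_comp[OF depends_only_on_factor, where H=ln]])
  qed
  obtain i where i: "i < d" "b i = 1" using outside cs_ne by blast
  have "b i \<le> wt d b" unfolding wt_def using i(1) by (intro member_le_sum) auto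
  then have const_coeff: "(\<Sum>a\<in>cfgs d. walsh d b a) = 0"
    using sum_walsh_eq_0[OF b] i(2) by simp
  have "(\<Sum>a\<in>cfgs d. walsh d b a * ln (mle_formula d n cs a))
      = (\<Sum>a\<in>cfgs d. \<Sum>j<length cs. walsh d b a * ln (factor j a)) - ln (2 ^ d) * (\<Sum>a\<in>cfgs d. walsh d b a)"
    by (simp add: ln_mle right_diff_distrib sum_subtractf sum_distrib_left sum_distrib_right ac_simps)
  also have "(\<Sum>a\<in>cfgs d. \<Sum>j<length cs. walsh d b a * ln (factor j a))
      = (\<Sum>j<length cs. \<Sum>a\<in>cfgs d. walsh d b a * ln (factor j a))"
    by (rule sum.swap)
  finally show ?thesis by (simp add: loglin_int_walsh factor_coeff const_coeff)
qed

lemma mle_formula_in_model: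
  assumes card_le_3: "\<forall>C\<in>set cs. card C \<le> 3"
  shows "mle_formula d n cs \<in> palindromic_ising d E"
  unfolding palindromic_ising_def
proof (intro CollectI conjI ballI allI impI mle_formula_pos sum_mle_formula mle_formula_compl_cfg)
  fix b assume b: "b \<in> cfgs d" and w: "3 \<le> wt d b"
  show "loglin_int d (mle_formula d n cs) b = 0"
  proof (cases "odd (wt d b)")
    case True
    then show ?thesis by (rule loglin_int_odd_wt_eq_0[OF _ b, rotated]) (simp add: mle_formula_compl_cfg)
  next
    case False
    then have card_supp: "4 \<le> card {i\<in>{..<d}. b i = 1}"
      using w wt_eq_card[OF b] by (cases "wt d b = 3") auto
    have "\<not> {i\<in>{..<d}. b i = 1} \<subseteq> cs ! j" if j: "j < length cs" for j
    proof
      assume "{i\<in>{..<d}. b i = 1} \<subseteq> cs ! j"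
      then have "card {i\<in>{..<d}. b i = 1} \<le> card (cs ! j)" by (rule card_mono[OF finite_nth_cs[OF j]])
      with card_supp card_le_3 nth_mem[OF j] show False by fastforce
    qed
    then show ?thesis by (intro loglin_int_mle_formula_eq_0[OF b]) blast
  qed
next
  fix s t assume st: "s < d" "t < d" "s \<noteq> t \<and> {s, t} \<notin> E"
  have "\<exists>i<d. pair_vec d s t i = 1 \<and> i \<notin> cs ! j" if j: "j < length cs" for j
  proof (cases "s \<in> cs ! j")
    case True
    then have "t \<notin> cs ! j" using clique_subset(3)[OF nth_mem[OF j], of s t] st by blast
    then show ?thesis using st by (intro exI[of _ t]) (simp add: pair_vec_def)
  next
    case False
    then show ?thesis using st by (intro exI[of _ s]) (simp add: pair_vec_def)
  qed
  then show "loglin_int d (mle_formula d n cs) (pair_vec d s t) = 0"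
    by (intro loglin_int_mle_formula_eq_0[OF pair_vec_in_cfgs]) blast
qed

end

section \<open>Log-likelihood in the model\<close>

lemma sum_mult_ln_eq_sum_loglin_int:
  "(\<Sum>a\<in>cfgs d. w a * ln (p a)) = (\<Sum>b\<in>cfgs d. loglin_int d p b * (\<Sum>a\<in>cfgs d. w a * walsh d b a))"
proof -
  have "(\<Sum>a\<in>cfgs d. w a * ln (p a)) = (\<Sum>a\<in>cfgs d. \<Sum>b\<in>cfgs d. w a * (loglin_int d p b * walsh d b a))"
    by (intro sum.cong refl) (simp add: ln_eq_sum_loglin_int sum_distrib_left)
  also have "\<dots> = (\<Sum>b\<in>cfgs d. loglin_int d p b * (\<Sum>a\<in>cfgs d. w a * walsh d b a))"
    by (subst sum.swap) (simp add: sum_distrib_left ac_simps)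
  finally show ?thesis .
qed

text \<open>Inside the model \<open>ln p\<close> is spanned by the constant and the pair signs of the edges, so
  \<open>\<Sum>a. w a * ln (p a)\<close> depends on \<open>w\<close> only through these moments.\<close>

lemma sum_mult_ln_eq_if_edge_moments_eq:
  assumes p: "p \<in> palindromic_ising d E"
    and total: "(\<Sum>a\<in>cfgs d. w1 a) = (\<Sum>a\<in>cfgs d. w2 a)"
    and moments: "\<And>s t. s < d \<Longrightarrow> t < d \<Longrightarrow> s \<noteq> t \<Longrightarrow> {s,t} \<in> E \<Longrightarrow>
       (\<Sum>a\<in>cfgs d. w1 a * pair_sign s t a) = (\<Sum>a\<in>cfgs d. w2 a * pair_sign s t a)"
  shows "(\<Sum>a\<in>cfgs d. w1 a * ln (p a)) = (\<Sum>a\<in>cfgs d. w2 a * ln (p a))"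
proof -
  have pal: "\<forall>a\<in>cfgs d. p (compl_cfg d a) = p a"
    and high: "\<forall>b\<in>cfgs d. 3 \<le> wt d b \<longrightarrow> loglin_int d p b = 0"
    and non_edge: "\<forall>s<d. \<forall>t<d. s \<noteq> t \<and> {s, t} \<notin> E \<longrightarrow> loglin_int d p (pair_vec d s t) = 0"
    using p unfolding palindromic_ising_def by auto
  have "loglin_int d p b * (\<Sum>a\<in>cfgs d. w1 a * walsh d b a) = loglin_int d p b * (\<Sum>a\<in>cfgs d. w2 a * walsh d b a)"
    if b: "b \<in> cfgs d" for b
  proof -
    consider "wt d b = 0" | "wt d b = 1" | "wt d b = 2" | "3 \<le> wt d b" by linarith
    then show ?thesis
    proof cases
      case 1
      then have "walsh d b a = 1" for a using b unfolding walsh_def dotp_def wt_def by simp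
      then show ?thesis using total by simp
    next
      case 2
      then show ?thesis using loglin_int_odd_wt_eq_0[OF pal b] by simp
    next
      case 3
      then obtain s t where st: "s < d" "t < d" "s \<noteq> t" "b = pair_vec d s t"
        using wt_eq_2_imp_pair_vec[OF b] by blast
      then show ?thesis
        using moments[OF st(1-3)] non_edge by (cases "{s,t} \<in> E") (auto simp: walsh_pair_vec)
    next
      case 4
      then show ?thesis using high b by simp
    qed
  qed
  then show ?thesis unfolding sum_mult_ln_eq_sum_loglin_int by (rule sum.cong[OF refl])
qed

lemma mult_ln_divide_le:
  fixes m p :: real
  assumes "0 < m" "0 < p"
  shows "m * ln (p / m) \<le> p - m" and "p \<noteq> m \<Longrightarrow> m * ln (p / m) < p - m"
proof -
  have eq: "m * (p / m - 1) = p - m" using assms by (simp add: field_simps)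
  have le: "ln (p / m) \<le> p / m - 1" using assms by (intro ln_le_minus_one) simp
  have "m * ln (p / m) \<le> m * (p / m - 1)" using le assms(1) by (intro mult_left_mono) simp_all
  then show "m * ln (p / m) \<le> p - m" unfolding eq .
  assume "p \<noteq> m"
  then have "ln (p / m) \<noteq> p / m - 1" using ln_eq_minus_one[of "p / m"] assms by auto
  with le have "ln (p / m) < p / m - 1" by simp
  then have "m * ln (p / m) < m * (p / m - 1)" using assms(1) by (intro mult_strict_left_mono) simp_all
  then show "m * ln (p / m) < p - m" unfolding eq .
qed

lemma gibbs_inequality:
  assumes fin: "finite A" and m_pos: "\<forall>a\<in>A. 0 < m a" and p_pos: "\<forall>a\<in>A. 0 < p a"
    and sum_m: "(\<Sum>a\<in>A. m a) = 1" and sum_p: "(\<Sum>a\<in>A. p a) = 1"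
  shows "(\<Sum>a\<in>A. m a * ln (p a)) \<le> (\<Sum>a\<in>A. m a * ln (m a))"
    and "(\<Sum>a\<in>A. m a * ln (p a)) = (\<Sum>a\<in>A. m a * ln (m a)) \<Longrightarrow> \<forall>a\<in>A. p a = (m a :: real)"
proof -
  have diff: "(\<Sum>a\<in>A. m a * ln (p a)) - (\<Sum>a\<in>A. m a * ln (m a)) = (\<Sum>a\<in>A. m a * ln (p a / m a))"
    by (simp add: ln_divide_pos m_pos p_pos right_diff_distrib flip: sum_subtractf)
  have zero: "(\<Sum>a\<in>A. p a - m a) = 0" using sum_m sum_p by (simp add: sum_subtractf)
  have "(\<Sum>a\<in>A. m a * ln (p a / m a)) \<le> (\<Sum>a\<in>A. p a - m a)"
    using m_pos p_pos by (intro sum_mono mult_ln_divide_le(1)) auto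
  then show "(\<Sum>a\<in>A. m a * ln (p a)) \<le> (\<Sum>a\<in>A. m a * ln (m a))" using diff zero by simp
  assume eq: "(\<Sum>a\<in>A. m a * ln (p a)) = (\<Sum>a\<in>A. m a * ln (m a))"
  show "\<forall>a\<in>A. p a = m a"
  proof (rule ccontr)
    assume "\<not> (\<forall>a\<in>A. p a = m a)"
    then obtain a0 where a0: "a0 \<in> A" "p a0 \<noteq> m a0" by blast
    have "(\<Sum>a\<in>A. m a * ln (p a / m a)) < (\<Sum>a\<in>A. p a - m a)"
      using m_pos p_pos a0
      by (intro sum_strict_mono_ex1[OF fin]) (auto intro: mult_ln_divide_le)
    then show False using diff eq zero by simp
  qed
qed

context positive_clique_marginals
begin

text \<open>The product formula has the empirical total and edge moments, so it can replace the
  empirical distribution in the log-likelihood of any member of the model.\<close>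

lemma loglik_eq_cross_entropy:
  assumes N: "0 < sample_size d n" and p: "p \<in> palindromic_ising d E"
  shows "loglik d n p = real (sample_size d n) * (\<Sum>a\<in>cfgs d. mle_formula d n cs a * ln (p a))"
proof -
  let ?N = "real (sample_size d n)"
  have total: "(\<Sum>a\<in>cfgs d. real (n a)) = ?N"
    unfolding sample_size_def by simp
  have "(\<Sum>a\<in>cfgs d. real (n a) / ?N * ln (p a)) = (\<Sum>a\<in>cfgs d. mle_formula d n cs a * ln (p a))"
  proof (rule sum_mult_ln_eq_if_edge_moments_eq[OF p])
    show "(\<Sum>a\<in>cfgs d. real (n a) / ?N) = (\<Sum>a\<in>cfgs d. mle_formula d n cs a)"
      using N by (simp add: sum_mle_formula total flip: sum_divide_distrib)
    fix s t assume st: "s < d" "t < d" "s \<noteq> t" "{s,t} \<in> E"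
    have "(\<Sum>a\<in>cfgs d. real (n a) / ?N * pair_sign s t a) = xi_hat d n s t"
      unfolding xi_hat_def pair_sign_def sum_divide_distrib by (simp add: ac_simps)
    then show "(\<Sum>a\<in>cfgs d. real (n a) / ?N * pair_sign s t a) = (\<Sum>a\<in>cfgs d. mle_formula d n cs a * pair_sign s t a)"
      using sum_mle_formula_pair_sign[OF st] by simp
  qed
  moreover have "loglik d n p = ?N * (\<Sum>a\<in>cfgs d. real (n a) / ?N * ln (p a))"
    unfolding loglik_def sum_distrib_left using N by (intro sum.cong refl) simp
  ultimately show ?thesis by simp
qed

lemma mle_formula_maximizes:
  assumes N: "0 < sample_size d n" and card_le_3: "\<forall>C\<in>set cs. card C \<le> 3"
    and p: "p \<in> palindromic_ising d E"
  shows "loglik d n p \<le> loglik d n (mle_formula d n cs)"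
proof -
  have "(\<Sum>a\<in>cfgs d. mle_formula d n cs a * ln (p a)) \<le> (\<Sum>a\<in>cfgs d. mle_formula d n cs a * ln (mle_formula d n cs a))"
    using p by (intro gibbs_inequality(1) finite_cfgs sum_mle_formula ballI mle_formula_pos)
      (auto simp: palindromic_ising_def)
  then show ?thesis
    unfolding loglik_eq_cross_entropy[OF N p] loglik_eq_cross_entropy[OF N mle_formula_in_model[OF card_le_3]]
    by (rule mult_left_mono) simp
qed

lemma maximizer_eq_mle_formula:
  assumes N: "0 < sample_size d n" and card_le_3: "\<forall>C\<in>set cs. card C \<le> 3"
    and q: "q \<in> palindromic_ising d E" and max: "loglik d n (mle_formula d n cs) \<le> loglik d n q"
    and a: "a \<in> cfgs d"
  shows "q a = mle_formula d n cs a"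
proof -
  have q_pos: "\<forall>a\<in>cfgs d. 0 < q a" and sum_q: "(\<Sum>a\<in>cfgs d. q a) = 1"
    using q unfolding palindromic_ising_def by auto
  have "(\<Sum>a\<in>cfgs d. mle_formula d n cs a * ln (mle_formula d n cs a)) \<le> (\<Sum>a\<in>cfgs d. mle_formula d n cs a * ln (q a))"
    using max N
    unfolding loglik_eq_cross_entropy[OF N q] loglik_eq_cross_entropy[OF N mle_formula_in_model[OF card_le_3]]
    by simp
  then have "(\<Sum>a\<in>cfgs d. mle_formula d n cs a * ln (q a)) = (\<Sum>a\<in>cfgs d. mle_formula d n cs a * ln (mle_formula d n cs a))"
    using gibbs_inequality(1)[OF finite_cfgs _ q_pos sum_mle_formula sum_q] mle_formula_pos by fastforce
  then show ?thesis
    using gibbs_inequality(2)[OF finite_cfgs _ q_pos sum_mle_formula sum_q] mle_formula_pos a by blast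
qed

end

section \<open>Maximizers of the likelihood\<close>

definition tilt_norm :: "nat \<Rightarrow> ((nat \<Rightarrow> nat) \<Rightarrow> real) \<Rightarrow> nat \<Rightarrow> nat \<Rightarrow> real \<Rightarrow> real" where
  "tilt_norm d q s t \<tau> = (\<Sum>a\<in>cfgs d. q a * exp (\<tau> * pair_sign s t a))"

definition tilt :: "nat \<Rightarrow> ((nat \<Rightarrow> nat) \<Rightarrow> real) \<Rightarrow> nat \<Rightarrow> nat \<Rightarrow> real \<Rightarrow> (nat \<Rightarrow> nat) \<Rightarrow> real" where
  "tilt d q s t \<tau> a = q a * exp (\<tau> * pair_sign s t a) / tilt_norm d q s t \<tau>"

lemma tilt_norm_pos: "\<forall>a\<in>cfgs d. 0 < q a \<Longrightarrow> 0 < tilt_norm d q s t \<tau>"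
  unfolding tilt_norm_def using card_cfgs[of d] finite_cfgs
  by (intro sum_pos) (auto simp: card_gt_0_iff[symmetric])

lemma ln_tilt:
  assumes q: "\<forall>a\<in>cfgs d. 0 < q a" and a: "a \<in> cfgs d"
  shows "ln (tilt d q s t \<tau> a) = ln (q a) + \<tau> * pair_sign s t a - ln (tilt_norm d q s t \<tau>)"
proof -
  have "0 < q a" "0 < exp (\<tau> * pair_sign s t a)" "0 < tilt_norm d q s t \<tau>"
    using q a tilt_norm_pos[OF q] by auto
  then show ?thesis unfolding tilt_def by (simp add: ln_div ln_mult)
qed

lemma loglin_int_tilt:
  assumes q: "\<forall>a\<in>cfgs d. 0 < q a" and st: "s < d" "t < d" "s \<noteq> t"
    and b: "b \<in> cfgs d" "0 < wt d b" "b \<noteq> pair_vec d s t"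
  shows "loglin_int d (tilt d q s t \<tau>) b = loglin_int d q b"
proof -
  have "(\<Sum>a\<in>cfgs d. walsh d b a * pair_sign s t a) = 0"
    using walsh_orthogonal[OF b(1) pair_vec_in_cfgs, of s t] b(3) st by (simp add: walsh_pair_vec)
  moreover have "(\<Sum>a\<in>cfgs d. walsh d b a * ln (tilt d q s t \<tau> a))
      = (\<Sum>a\<in>cfgs d. walsh d b a * ln (q a)) + \<tau> * (\<Sum>a\<in>cfgs d. walsh d b a * pair_sign s t a)
        - ln (tilt_norm d q s t \<tau>) * (\<Sum>a\<in>cfgs d. walsh d b a)"
    by (simp add: ln_tilt[OF q] sum_distrib_left sum_distrib_right sum.distrib sum_subtractf algebra_simps)
  ultimately show ?thesis
    unfolding loglin_int_walsh using sum_walsh_eq_0[OF b(1,2)] by simp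
qed

lemma tilt_in_model:
  assumes q: "q \<in> palindromic_ising d E" and st: "s < d" "t < d" "s \<noteq> t" "{s,t} \<in> E"
  shows "tilt d q s t \<tau> \<in> palindromic_ising d E"
proof -
  have q_pos: "\<forall>a\<in>cfgs d. 0 < q a" and sum_q: "(\<Sum>a\<in>cfgs d. q a) = 1"
    and q_pal: "\<forall>a\<in>cfgs d. q (compl_cfg d a) = q a"
    and q_high: "\<forall>b\<in>cfgs d. 3 \<le> wt d b \<longrightarrow> loglin_int d q b = 0"
    and q_non_edge: "\<forall>u<d. \<forall>v<d. u \<noteq> v \<and> {u, v} \<notin> E \<longrightarrow> loglin_int d q (pair_vec d u v) = 0"
    using q unfolding palindromic_ising_def by auto
  show ?thesis
    unfolding palindromic_ising_def
  proof (intro CollectI conjI ballI allI impI)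
    show "0 < tilt d q s t \<tau> a" if "a \<in> cfgs d" for a
      using q_pos that tilt_norm_pos[OF q_pos] by (simp add: tilt_def)
    have "(\<Sum>a\<in>cfgs d. tilt d q s t \<tau> a) = tilt_norm d q s t \<tau> / tilt_norm d q s t \<tau>"
      unfolding tilt_def sum_divide_distrib[symmetric] tilt_norm_def ..
    then show "(\<Sum>a\<in>cfgs d. tilt d q s t \<tau> a) = 1"
      using tilt_norm_pos[OF q_pos, of s t \<tau>] by simp
    show "tilt d q s t \<tau> (compl_cfg d a) = tilt d q s t \<tau> a" if "a \<in> cfgs d" for a
      using q_pal that st by (simp add: tilt_def pair_sign_compl_cfg)
  next
    fix b assume b: "b \<in> cfgs d" "3 \<le> wt d b"
    then have "b \<noteq> pair_vec d s t" using wt_pair_vec[OF st(1-3)] by auto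
    then show "loglin_int d (tilt d q s t \<tau>) b = 0"
      using loglin_int_tilt[OF q_pos st(1-3) b(1)] b q_high by simp
  next
    fix u v assume uv: "u < d" "v < d" "u \<noteq> v \<and> {u, v} \<notin> E"
    then have "pair_vec d u v \<noteq> pair_vec d s t" using st by (auto simp: pair_vec_eq_iff)
    then show "loglin_int d (tilt d q s t \<tau>) (pair_vec d u v) = 0"
      using loglin_int_tilt[OF q_pos st(1-3) pair_vec_in_cfgs] wt_pair_vec[of u d v] uv q_non_edge by simp
  qed
qed

lemma loglik_tilt:
  assumes q: "\<forall>a\<in>cfgs d. 0 < q a"
  shows "loglik d n (tilt d q s t \<tau>) = loglik d n q + \<tau> * (\<Sum>a\<in>cfgs d. real (n a) * pair_sign s t a)
      - real (sample_size d n) * ln (tilt_norm d q s t \<tau>)"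
  by (simp add: loglik_def sample_size_def ln_tilt[OF q] algebra_simps sum.distrib sum_subtractf
      sum_distrib_left sum_distrib_right)

lemma tilt_norm_has_derivative:
  "(tilt_norm d q s t has_field_derivative (\<Sum>a\<in>cfgs d. q a * pair_sign s t a)) (at 0)"
proof -
  have "((\<lambda>\<tau>. \<Sum>a\<in>cfgs d. q a * exp (\<tau> * pair_sign s t a)) has_field_derivative
      (\<Sum>a\<in>cfgs d. q a * (exp (0 * pair_sign s t a) * pair_sign s t a))) (at 0)"
    by (rule DERIV_sum) (auto intro!: derivative_eq_intros)
  then show ?thesis unfolding tilt_norm_def[abs_def] by simp
qed

text \<open>First-order condition at a maximizer: the log-likelihood along the exponential tilt in the
  direction of an edge has a maximum at \<open>\<tau> = 0\<close>.\<close>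

lemma maximizer_pair_moment:
  assumes N: "0 < sample_size d n" and q: "q \<in> palindromic_ising d E"
    and max: "\<forall>p\<in>palindromic_ising d E. loglik d n p \<le> loglik d n q"
    and st: "s < d" "t < d" "s \<noteq> t" "{s,t} \<in> E"
  shows "(\<Sum>a\<in>cfgs d. q a * pair_sign s t a) = xi_hat d n s t"
proof -
  have q_pos: "\<forall>a\<in>cfgs d. 0 < q a" and sum_q: "(\<Sum>a\<in>cfgs d. q a) = 1"
    using q unfolding palindromic_ising_def by auto
  define X where "X = (\<Sum>a\<in>cfgs d. real (n a) * pair_sign s t a)"
  define N' where "N' = real (sample_size d n)"
  define f where "f \<tau> = loglik d n q + \<tau> * X - N' * ln (tilt_norm d q s t \<tau>)" for \<tau>
  have Z0: "tilt_norm d q s t 0 = 1" using sum_q by (simp add: tilt_norm_def)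
  have "(f has_field_derivative X - N' * ((\<Sum>a\<in>cfgs d. q a * pair_sign s t a) / tilt_norm d q s t 0)) (at 0)"
    unfolding f_def by (auto intro!: derivative_eq_intros tilt_norm_has_derivative tilt_norm_pos q_pos)
  moreover have "f \<tau> \<le> f 0" for \<tau>
  proof -
    have "loglik d n (tilt d q s t \<tau>) \<le> loglik d n q" using max tilt_in_model[OF q st] by blast
    then show ?thesis unfolding f_def Z0 X_def N'_def loglik_tilt[OF q_pos] by simp
  qed
  ultimately have "X - N' * ((\<Sum>a\<in>cfgs d. q a * pair_sign s t a) / tilt_norm d q s t 0) = 0"
    by (intro DERIV_local_max[where d=1]) auto
  then show ?thesis
    using N unfolding Z0 X_def N'_def xi_hat_def pair_sign_def by (simp add: field_simps)
qed

lemma one_plus_sum_pair_products_nonneg: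
  fixes e :: "nat \<Rightarrow> real"
  assumes fin: "finite C" and card_C: "card C \<le> 3" and signs: "\<forall>u\<in>C. e u = 1 \<or> e u = -1"
  shows "0 \<le> 1 + (\<Sum>u\<in>C. \<Sum>v\<in>C. if u < v then e u * e v else 0)"
proof -
  define S where "S = (\<Sum>u\<in>C. \<Sum>v\<in>C. if u < v then e u * e v else 0)"
  have split: "e u * e v = (if u < v then e u * e v else 0) + (if v < u then e v * e u else 0)
      + (if u = v then 1 else 0)" if "u \<in> C" "v \<in> C" for u v
    using signs that by auto
  have "(\<Sum>u\<in>C. e u)\<^sup>2 = (\<Sum>u\<in>C. \<Sum>v\<in>C. e u * e v)"
    by (simp add: power2_eq_square sum_product)
  also have "\<dots> = S + (\<Sum>u\<in>C. \<Sum>v\<in>C. if v < u then e v * e u else 0) + real (card C)"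
    unfolding S_def using fin by (simp add: split sum.distrib cong: sum.cong)
  also have "(\<Sum>u\<in>C. \<Sum>v\<in>C. if v < u then e v * e u else 0) = S"
    unfolding S_def by (rule sum.swap)
  finally have square: "(\<Sum>u\<in>C. e u)\<^sup>2 = 2 * S + real (card C)" by simp
  show ?thesis
  proof (cases "card C = 3")
    case True
    then obtain x y z where C: "C = {x,y,z}" "x \<noteq> y" "y \<noteq> z" "x \<noteq> z" by (auto simp: card_3_iff)
    then have "1 \<le> (\<Sum>u\<in>C. e u)\<^sup>2" using signs by (auto simp: power2_eq_square)
    then show ?thesis using square True unfolding S_def by simp
  next
    case False
    then have "real (card C) \<le> 2" using card_C by simp
    moreover have "0 \<le> (\<Sum>u\<in>C. e u)\<^sup>2" by simp
    ultimately show ?thesis using square unfolding S_def by linarith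
  qed
qed

lemma pair_poly_pair_sign_nonneg:
  assumes "finite C" "card C \<le> 3"
  shows "0 \<le> pair_poly (\<lambda>s t. pair_sign s t a0) C a"
proof -
  define e where "e u = (-1::real) ^ (a0 u + a u)" for u
  have "e u = 1 \<or> e u = -1" for u
    unfolding e_def by (cases "even (a0 u + a u)") auto
  moreover have prod_e: "pair_sign s t a * pair_sign s t a0 = e s * e t" for s t
    unfolding pair_sign_def e_def by (simp add: ac_simps flip: power_add)
  ultimately show ?thesis
    using one_plus_sum_pair_products_nonneg[OF assms, of e] unfolding pair_poly_def prod_e by simp
qed

context perfect_clique_order
begin

text \<open>At a maximizer \<open>q\<close> the pair moments on a clique \<open>C\<close> are those of the data, so
  \<open>marg_poly d n C a0\<close> is the \<open>q\<close>-average of a function that is nonnegative when \<open>card C \<le> 3\<close>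
  and positive at \<open>a0\<close>.\<close>

lemma maximizer_sym_marg_hat_pos:
  assumes N: "0 < sample_size d n" and card_le_3: "\<forall>C\<in>set cs. card C \<le> 3"
    and q: "q \<in> palindromic_ising d E" and max: "\<forall>p\<in>palindromic_ising d E. loglik d n p \<le> loglik d n q"
    and C: "C \<in> set cs" and a0: "a0 \<in> cfgs d"
  shows "0 < sym_marg_hat d n C a0"
proof -
  have q_pos: "\<forall>a\<in>cfgs d. 0 < q a" and sum_q: "(\<Sum>a\<in>cfgs d. q a) = 1"
    using q unfolding palindromic_ising_def by auto
  have finC: "finite C" and card_C: "card C \<le> 3" using clique_subset(2)[OF C] card_le_3 C by auto
  let ?w = "pair_poly (\<lambda>s t. pair_sign s t a0) C"
  have "marg_poly d n C a0 = (\<Sum>a\<in>cfgs d. q a * ?w a)"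
  proof -
    have "xi_hat d n s t = (\<Sum>a\<in>cfgs d. q a * pair_sign s t a)" if "s \<in> C" "t \<in> C" "s < t" for s t
      using maximizer_pair_moment[OF N q max] clique_subset[OF C] that by force
    then show ?thesis
      unfolding sum_mult_pair_poly sum_q by (simp add: pair_poly_def ac_simps cong: sum.cong if_cong)
  qed
  also have "\<dots> > 0"
  proof (rule sum_pos2[OF finite_cfgs a0])
    have "1 \<le> ?w a0"
      unfolding pair_poly_def by (simp add: pair_sign_square sum_nonneg)
    then show "0 < q a0 * ?w a0" using q_pos a0 by simp
    show "0 \<le> q a * ?w a" if "a \<in> cfgs d" for a
      using q_pos that by (intro mult_nonneg_nonneg pair_poly_pair_sign_nonneg[OF finC card_C]) auto
  qed
  finally show ?thesis by (simp add: sym_marg_hat_eq_marg_poly)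
qed

end

theorem proposition5p3:
  fixes d :: nat and E :: "nat set set" and cs :: "nat set list"
    and n :: "(nat \<Rightarrow> nat) \<Rightarrow> nat"
  assumes "is_graph d E"
    and "perfect_clique_seq d E cs"
    and "\<forall>C. is_clique d E C \<longrightarrow> card C \<le> 3"
    and "\<exists>C. is_clique d E C \<and> card C = 3"
    and "0 < sample_size d n"
  shows "(\<forall>q\<in>palindromic_ising d E.
            (\<forall>p\<in>palindromic_ising d E. loglik d n p \<le> loglik d n q) \<longrightarrow>
            (\<forall>a\<in>cfgs d. q a = mle_formula d n cs a))
       \<and> ((\<forall>C\<in>set cs. \<forall>a\<in>cfgs d. 0 < sym_marg_hat d n C a) \<longrightarrow>
            mle_formula d n cs \<in> palindromic_ising d E \<and>
            (\<forall>p\<in>palindromic_ising d E. loglik d n p \<le> loglik d n (mle_formula d n cs)))"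
proof -
  interpret perfect_clique_order d E cs using assms(2) by unfold_locales
  have card_le_3: "\<forall>C\<in>set cs. card C \<le> 3" using assms(3) in_set_cs_iff by blast
  show ?thesis
  proof (rule conjI; intro ballI impI)
    fix q a assume q: "q \<in> palindromic_ising d E"
      and max: "\<forall>p\<in>palindromic_ising d E. loglik d n p \<le> loglik d n q" and a: "a \<in> cfgs d"
    interpret positive_clique_marginals d E cs n
      using maximizer_sym_marg_hat_pos[OF assms(5) card_le_3 q max] by unfold_locales blast
    show "q a = mle_formula d n cs a"
      using maximizer_eq_mle_formula[OF assms(5) card_le_3 q _ a] max mle_formula_in_model[OF card_le_3]
      by blast
  next
    assume "\<forall>C\<in>set cs. \<forall>a\<in>cfgs d. 0 < sym_marg_hat d n C a"
    then interpret positive_clique_marginals d E cs n by unfold_locales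
    show "mle_formula d n cs \<in> palindromic_ising d E \<and>
        (\<forall>p\<in>palindromic_ising d E. loglik d n p \<le> loglik d n (mle_formula d n cs))"
      using mle_formula_in_model[OF card_le_3] mle_formula_maximizes[OF assms(5) card_le_3] by blast
  qed
qed

end
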